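(* Let $M\ge2$, $N,K\ge1$ be integers, $B\in\mathbb R$, and for $n=1,\dots,N$, $k=1,\dots,K$ let $S^{(2)}_{n,k}\ge 0$ and $S^{(3)}_{n,k}>0$ be given real numbers. Consider the problem, over real variables $\{B_{n,k}\}$ (no integrality or nonnegativity constraint), $$\min_{\{B_{n,k}\}}\ \prod_{n=1}^N\prod_{k=1}^K\Big(1+S^{(2)}_{n,k}+\Gamma\!\Big(\tfrac{2M-1}{M-1}\Big)2^{-\frac{B_{n,k}}{M-1}}S^{(3)}_{n,k}\Big)\quad\text{s.t.}\quad \sum_{n=1}^N\sum_{k=1}^K B_{n,k}\le B .$$ Its solution is $$B^\star_{n,k}=\frac{B}{NK}+(M-1)\log_2\!\Big(\frac{S^{(3)}_{n,k}}{1+S^{(2)}_{n,k}}\Big)+\frac{M-1}{NK}\sum_{p=1}^N\sum_{q=1}^K\log_2\!\Big(\frac{1+S^{(2)}_{p,q}}{S^{(3)}_{p,q}}\Big).$$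
   Context: $\Gamma$ denotes the Euler Gamma function. (In the paper, $S^{(2)}_{n,k}$ and $S^{(3)}_{n,k}$ are the normalized intra-cluster and inter-cluster interference powers of user $(n,k)$ and $B_{n,k}$ its number of CSI feedback bits, but the statement is purely about the optimization problem above.) *)

theory Defs
  imports "HOL-Analysis.Analysis"
begin

definition objective :: "nat \<Rightarrow> nat \<Rightarrow> nat \<Rightarrow> (nat \<Rightarrow> nat \<Rightarrow> real) \<Rightarrow> (nat \<Rightarrow> nat \<Rightarrow> real)
    \<Rightarrow> (nat \<Rightarrow> nat \<Rightarrow> real) \<Rightarrow> real" where
  "objective M N K S2 S3 Bv =
     (\<Prod>n\<in>{1..N}. \<Prod>k\<in>{1..K}.
        1 + S2 n k + Gamma ((2 * real M - 1) / (real M - 1))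
              * 2 powr (- Bv n k / (real M - 1)) * S3 n k)"

definition feasible :: "nat \<Rightarrow> nat \<Rightarrow> real \<Rightarrow> (nat \<Rightarrow> nat \<Rightarrow> real) \<Rightarrow> bool" where
  "feasible N K B Bv \<longleftrightarrow> (\<Sum>n\<in>{1..N}. \<Sum>k\<in>{1..K}. Bv n k) \<le> B"

definition Bstar :: "nat \<Rightarrow> nat \<Rightarrow> nat \<Rightarrow> real \<Rightarrow> (nat \<Rightarrow> nat \<Rightarrow> real)
    \<Rightarrow> (nat \<Rightarrow> nat \<Rightarrow> real) \<Rightarrow> nat \<Rightarrow> nat \<Rightarrow> real" where
  "Bstar M N K B S2 S3 n k =
     B / (real N * real K) + (real M - 1) * log 2 (S3 n k / (1 + S2 n k))
     + (real M - 1) / (real N * real K) *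
         (\<Sum>p\<in>{1..N}. \<Sum>q\<in>{1..K}. log 2 ((1 + S2 p q) / S3 p q))"

end

theory Submission
  imports Defs
begin

text \<open>
  Substituting \<open>x = B\<^sub>n\<^sub>k ln 2 / (M - 1)\<close>, every factor of the objective becomes
  \<open>a + c e\<^sup>-\<^sup>x\<close> with \<open>a, c \<ge> 0\<close>. Its logarithm is convex in \<open>x\<close>, with derivative
  \<open>-t/(1 + t)\<close> at a point where \<open>c e\<^sup>-\<^sup>x = t a\<close>. The allocation \<open>B\<^sup>\<star>\<close> spends the
  whole budget and makes \<open>t\<close> the same for all factors, so the tangent lines of the
  log-factors at \<open>B\<^sup>\<star>\<close> share one slope; summing the tangent bounds shows that no
  allocation within the budget has a smaller log-objective.
\<close>

lemma one_plus_mult_exp_ge: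
  fixes t u :: real
  assumes "t \<ge> 0"
  shows "(1 + t) * exp (t / (1 + t) * u) \<le> 1 + t * exp u"
proof -
  let ?w = "t / (1 + t)"
  have "?w \<ge> 0" "?w \<le> 1" using assms by auto
  then have "exp ((1 - ?w) *\<^sub>R 0 + ?w *\<^sub>R u) \<le> (1 - ?w) * exp 0 + ?w * exp u"
    by (intro convex_onD[OF exp_convex]) auto
  then have "exp (?w * u) \<le> (1 - ?w) + ?w * exp u" by simp
  then have "(1 + t) * exp (?w * u) \<le> (1 + t) * ((1 - ?w) + ?w * exp u)"
    using assms by (intro mult_left_mono) auto
  also have "\<dots> = 1 + t * exp u" using assms by (simp add: field_simps)
  finally show ?thesis .
qed

lemma factor_tangent_bound:
  fixes a c t x y :: real
  assumes "a \<ge> 0" "t \<ge> 0" and equalized: "c * exp (- x) = a * t"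
  shows "(a + c * exp (- x)) * exp (t / (1 + t) * (x - y)) \<le> a + c * exp (- y)"
proof -
  have "exp (- y) = exp (- x) * exp (x - y)" by (simp flip: exp_add)
  then have shift: "c * exp (- y) = a * t * exp (x - y)"
    using equalized by (metis mult.assoc)
  have "(a + c * exp (- x)) * exp (t / (1 + t) * (x - y))
      = a * ((1 + t) * exp (t / (1 + t) * (x - y)))"
    using equalized by (simp add: algebra_simps)
  also have "\<dots> \<le> a * (1 + t * exp (x - y))"
    using assms by (intro mult_left_mono one_plus_mult_exp_ge)
  also have "\<dots> = a + c * exp (- y)"
    using shift by (simp add: algebra_simps)
  finally show ?thesis .
qed

lemma equalized_allocation_minimizes_prod:
  fixes I :: "'i set" and a c x y :: "'i \<Rightarrow> real" and t :: real
  assumes "finite I" and "\<And>i. i \<in> I \<Longrightarrow> a i \<ge> 0" and "\<And>i. i \<in> I \<Longrightarrow> c i \<ge> 0"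
    and "t \<ge> 0" and "\<And>i. i \<in> I \<Longrightarrow> c i * exp (- x i) = a i * t"
    and budget: "(\<Sum>i\<in>I. y i) \<le> (\<Sum>i\<in>I. x i)"
  shows "(\<Prod>i\<in>I. a i + c i * exp (- x i)) \<le> (\<Prod>i\<in>I. a i + c i * exp (- y i))"
proof -
  define w where "w = t / (1 + t)"
  have factor_nonneg: "0 \<le> a i + c i * exp (- z)" if "i \<in> I" for i z
    using assms(2,3) that by (simp add: add_nonneg_nonneg)
  have "0 \<le> w * (\<Sum>i\<in>I. x i - y i)"
    using \<open>t \<ge> 0\<close> budget unfolding w_def by (simp add: sum_subtractf)
  moreover have "0 \<le> (\<Prod>i\<in>I. a i + c i * exp (- x i))"
    using factor_nonneg by (simp add: prod_nonneg)
  ultimately have "(\<Prod>i\<in>I. a i + c i * exp (- x i))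
      \<le> (\<Prod>i\<in>I. a i + c i * exp (- x i)) * exp (w * (\<Sum>i\<in>I. x i - y i))"
    by (simp add: mult_le_cancel_left1)
  also have "\<dots> = (\<Prod>i\<in>I. (a i + c i * exp (- x i)) * exp (w * (x i - y i)))"
    using \<open>finite I\<close> by (simp add: sum_distrib_left exp_sum prod.distrib)
  also have "\<dots> \<le> (\<Prod>i\<in>I. a i + c i * exp (- y i))"
    using assms factor_nonneg unfolding w_def
    by (intro prod_mono conjI mult_nonneg_nonneg factor_tangent_bound) auto
  finally show ?thesis .
qed

lemma objective_eq_prod_exp:
  "objective M N K S2 S3 Bv = (\<Prod>(n, k)\<in>{1..N} \<times> {1..K}.
     (1 + S2 n k) + Gamma ((2 * real M - 1) / (real M - 1)) * S3 n k
       * exp (- (Bv n k * ln 2 / (real M - 1))))"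
  unfolding objective_def prod.cartesian_product
  by (intro prod.cong refl) (auto simp: powr_def algebra_simps)

lemma feasible_iff_sum_product:
  "feasible N K B Bv \<longleftrightarrow> (\<Sum>(n, k)\<in>{1..N} \<times> {1..K}. Bv n k) \<le> B"
  unfolding feasible_def sum.cartesian_product ..

lemma sum_Bstar:
  assumes "\<And>n k. n \<in> {1..N} \<Longrightarrow> k \<in> {1..K} \<Longrightarrow> S2 n k \<ge> 0"
    and "\<And>n k. n \<in> {1..N} \<Longrightarrow> k \<in> {1..K} \<Longrightarrow> S3 n k > 0"
    and "N \<ge> 1" "K \<ge> 1"
  shows "(\<Sum>(n, k)\<in>{1..N} \<times> {1..K}. Bstar M N K B S2 S3 n k) = B"
proof -
  let ?I = "{1..N} \<times> {1..K}" and ?s = "real M - 1"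
  define L where "L = (\<lambda>(p, q). log 2 ((1 + S2 p q) / S3 p q))"
  define level where "level = (B + ?s * sum L ?I) / card ?I"
  have "card ?I = real N * real K" by simp
  then have Bstar_eq: "Bstar M N K B S2 S3 n k = level - ?s * L (n, k)" if "(n, k) \<in> ?I" for n k
  proof -
    have "1 + S2 n k > 0" "S3 n k > 0" using assms(1,2) that by (auto simp: add_pos_nonneg)
    then have "log 2 (S3 n k / (1 + S2 n k)) = - L (n, k)"
      unfolding L_def by (simp add: log_divide)
    then show ?thesis
      using \<open>card ?I = real N * real K\<close>
      by (simp add: Bstar_def level_def L_def sum.cartesian_product add_divide_distrib)
  qed
  have "(\<Sum>(n, k)\<in>?I. Bstar M N K B S2 S3 n k) = (\<Sum>i\<in>?I. level - ?s * L i)"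
    using Bstar_eq by (intro sum.cong) auto
  also have "\<dots> = B"
    using assms(3,4) by (simp add: sum_subtractf level_def flip: sum_distrib_left)
  finally show ?thesis .
qed

lemma Bstar_equalizes:
  assumes "M \<noteq> 1"
    and "\<And>n k. n \<in> {1..N} \<Longrightarrow> k \<in> {1..K} \<Longrightarrow> S2 n k \<ge> 0"
    and "\<And>n k. n \<in> {1..N} \<Longrightarrow> k \<in> {1..K} \<Longrightarrow> S3 n k > 0"
  shows "\<exists>t > 0. \<forall>n\<in>{1..N}. \<forall>k\<in>{1..K}.
    S3 n k * exp (- (Bstar M N K B S2 S3 n k * ln 2 / (real M - 1))) = (1 + S2 n k) * t"
proof -
  let ?s = "real M - 1"
  define level where "level = B / (real N * real K) + ?s / (real N * real K)
    * (\<Sum>p\<in>{1..N}. \<Sum>q\<in>{1..K}. log 2 ((1 + S2 p q) / S3 p q))"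
  have "?s \<noteq> 0" using assms(1) by simp
  have "S3 n k * exp (- (Bstar M N K B S2 S3 n k * ln 2 / ?s))
      = (1 + S2 n k) * exp (- (level * ln 2 / ?s))"
    if "n \<in> {1..N}" "k \<in> {1..K}" for n k
  proof -
    have pos: "1 + S2 n k > 0" "S3 n k > 0" using assms(2,3) that by (auto simp: add_pos_nonneg)
    have "Bstar M N K B S2 S3 n k * ln 2 / ?s = level * ln 2 / ?s + ln (S3 n k / (1 + S2 n k))"
      using \<open>?s \<noteq> 0\<close> by (simp add: Bstar_def level_def log_def field_simps)
    then have "exp (- (Bstar M N K B S2 S3 n k * ln 2 / ?s))
        = exp (- (level * ln 2 / ?s) - ln (S3 n k / (1 + S2 n k)))"
      by simp
    also have "\<dots> = exp (- (level * ln 2 / ?s)) * (1 + S2 n k) / S3 n k"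
      using pos by (simp add: exp_diff)
    finally show ?thesis
      using pos by simp
  qed
  then show ?thesis by (intro exI[of _ "exp (- (level * ln 2 / ?s))"]) auto
qed

theorem theorem3:
  fixes M N K :: nat and B :: real and S2 S3 :: "nat \<Rightarrow> nat \<Rightarrow> real"
  assumes "M \<ge> 2" and "N \<ge> 1" and "K \<ge> 1"
    and "\<And>n k. n \<in> {1..N} \<Longrightarrow> k \<in> {1..K} \<Longrightarrow> S2 n k \<ge> 0"
    and "\<And>n k. n \<in> {1..N} \<Longrightarrow> k \<in> {1..K} \<Longrightarrow> S3 n k > 0"
  shows "feasible N K B (Bstar M N K B S2 S3)
       \<and> (\<forall>Bv. feasible N K B Bv \<longrightarrow>
             objective M N K S2 S3 (Bstar M N K B S2 S3) \<le> objective M N K S2 S3 Bv)"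
proof (intro conjI allI impI)
  let ?I = "{1..N} \<times> {1..K}" and ?s = "real M - 1"
  let ?G = "Gamma ((2 * real M - 1) / (real M - 1))"
  have sum_Bstar: "(\<Sum>(n, k)\<in>?I. Bstar M N K B S2 S3 n k) = B"
    using assms by (intro sum_Bstar)
  then show "feasible N K B (Bstar M N K B S2 S3)"
    by (simp add: feasible_iff_sum_product)
  fix Bv assume "feasible N K B Bv"
  then have "(\<Sum>(n, k)\<in>?I. Bv n k) * ln 2 / ?s \<le> B * ln 2 / ?s"
    using assms(1) by (intro divide_right_mono mult_right_mono) (auto simp: feasible_iff_sum_product)
  then have "(\<Sum>(n, k)\<in>?I. Bv n k * ln 2 / ?s)
      \<le> (\<Sum>(n, k)\<in>?I. Bstar M N K B S2 S3 n k * ln 2 / ?s)"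
    using sum_Bstar by (simp add: case_prod_beta' flip: sum_divide_distrib sum_distrib_right)
  moreover have "?G > 0" using assms(1) by (intro Gamma_real_pos) auto
  moreover obtain t where "t > 0" and "\<And>n k. n \<in> {1..N} \<Longrightarrow> k \<in> {1..K} \<Longrightarrow>
    S3 n k * exp (- (Bstar M N K B S2 S3 n k * ln 2 / ?s)) = (1 + S2 n k) * t"
    using Bstar_equalizes[of M N K S2 S3 B] assms by auto
  ultimately show "objective M N K S2 S3 (Bstar M N K B S2 S3) \<le> objective M N K S2 S3 Bv"
    unfolding objective_eq_prod_exp split_def using assms(4,5)
    by (intro equalized_allocation_minimizes_prod[where t = "?G * t"]) (auto simp: less_imp_le)
qed

end
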